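(* Let $n\ge 1$. If there is a balanced stack of $n$ blocks of length $1$ and weight $1$ achieving overhang $d$, then there is a sequence of at most $n-1$ lossy moves that transforms some distribution $\mu$ with $M_0[\mu]=\mu\{x\le 0\}=n$ and $\mu\{x>0\}=0$ into a distribution $\mu'$ with $\mu'\{x\ge d-1\}\ge 1$.
   Context: Stacks: the table is $B_0=(-\infty,0]\times(-\infty,0]$; block $B_i$ occupies $[x_i,x_i+1]\times[y_i,y_i+h]$, blocks have disjoint interiors; $B_i$ rests on $B_j$ if they intersect and $y_i=y_j+h$ ($B_i$ rests on the table if $B_i\cap B_0\neq\emptyset$). Supporting blocks (or the table) exert upward vertical forces $\ge0$ at points of the contact segments, with equal opposite reactions; each block has weight $1$ acting at horizontal position $x_i+\frac12$. The stack is balanced if forces can be chosen so that for every block the total force and total moment vanish. Overhang is $\max_i(x_i+1)$. A distribution is a finite set $\{(x_1,m_1),\dots,(x_k,m_k)\}$ with $m_i>0$; signed distributions allow arbitrary real $m_i$; $\mu(A)=\sum_{x_i\in A}m_i$; $M_j[\mu]=\sum_i m_ix_i^j$. A move $([a,b],\delta)$ has $b-a=1$ and $\delta$ a signed distribution on $[a,b]$ with $M_0[\delta]=M_1[\delta]=0$. The associated lossy move is $([a,b],\delta^\downarrow)$ with $\delta^\downarrow=\delta-\{(\frac{a+b}2,1)\}$; it can be applied to $\mu$ if $\mu+\delta^\downarrow$ is a distribution, and its result is $\mu+\delta^\downarrow$. *)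

theory Defs
  imports Complex_Main
begin

text \<open>A stack of n blocks of height h: block i (for i in 1..n) occupies
  [x i, x i + 1] x [y i, y i + h].  Index 0 denotes the table
  B_0 = (-inf,0] x (-inf,0].\<close>

definition block :: "real \<Rightarrow> (nat \<Rightarrow> real) \<Rightarrow> (nat \<Rightarrow> real) \<Rightarrow> nat \<Rightarrow> (real \<times> real) set" where
  "block h x y i = {(p, q). x i \<le> p \<and> p \<le> x i + 1 \<and> y i \<le> q \<and> q \<le> y i + h}"

definition table :: "(real \<times> real) set" where
  "table = {(p, q). p \<le> 0 \<and> q \<le> 0}"

definition block_interior :: "real \<Rightarrow> (nat \<Rightarrow> real) \<Rightarrow> (nat \<Rightarrow> real) \<Rightarrow> nat \<Rightarrow> (real \<times> real) set" where
  "block_interior h x y i = {(p, q). x i < p \<and> p < x i + 1 \<and> y i < q \<and> q < y i + h}"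

definition table_interior :: "(real \<times> real) set" where
  "table_interior = {(p, q). p < 0 \<and> q < 0}"

definition valid_stack :: "nat \<Rightarrow> real \<Rightarrow> (nat \<Rightarrow> real) \<Rightarrow> (nat \<Rightarrow> real) \<Rightarrow> bool" where
  "valid_stack n h x y \<longleftrightarrow> h > 0 \<and>
     (\<forall>i\<in>{1..n}. \<forall>j\<in>{1..n}. i \<noteq> j \<longrightarrow> block_interior h x y i \<inter> block_interior h x y j = {}) \<and>
     (\<forall>i\<in>{1..n}. block_interior h x y i \<inter> table_interior = {})"

definition rests_on :: "real \<Rightarrow> (nat \<Rightarrow> real) \<Rightarrow> (nat \<Rightarrow> real) \<Rightarrow> nat \<Rightarrow> nat \<Rightarrow> bool" where
  "rests_on h x y i j \<longleftrightarrow>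
     (if j = 0 then block h x y i \<inter> table \<noteq> {}
      else i \<noteq> j \<and> block h x y i \<inter> block h x y j \<noteq> {} \<and> y i = y j + h)"

definition contact :: "real \<Rightarrow> (nat \<Rightarrow> real) \<Rightarrow> (nat \<Rightarrow> real) \<Rightarrow> nat \<Rightarrow> nat \<Rightarrow> real set" where
  "contact h x y i j =
     (if j = 0 then fst ` (block h x y i \<inter> table)
      else fst ` (block h x y i \<inter> block h x y j))"

text \<open>A force system F: F i j p is the upward force exerted by j (block or table)
  on block i at horizontal position p (block i exerts the opposite force on j).\<close>
definition supp_f :: "(real \<Rightarrow> real) \<Rightarrow> real set" where
  "supp_f f = {p. f p \<noteq> 0}"

definition tot_force :: "(real \<Rightarrow> real) \<Rightarrow> real" where
  "tot_force f = (\<Sum>p\<in>supp_f f. f p)"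

definition tot_moment :: "(real \<Rightarrow> real) \<Rightarrow> real" where
  "tot_moment f = (\<Sum>p\<in>supp_f f. p * f p)"

definition balanced :: "nat \<Rightarrow> real \<Rightarrow> (nat \<Rightarrow> real) \<Rightarrow> (nat \<Rightarrow> real) \<Rightarrow> bool" where
  "balanced n h x y \<longleftrightarrow>
    (\<exists>F :: nat \<Rightarrow> nat \<Rightarrow> real \<Rightarrow> real.
       (\<forall>i j p. F i j p \<ge> 0) \<and>
       (\<forall>i j. finite (supp_f (F i j))) \<and>
       (\<forall>i j p. F i j p \<noteq> 0 \<longrightarrow>
          i \<in> {1..n} \<and> j \<in> {0..n} \<and> rests_on h x y i j \<and> p \<in> contact h x y i j) \<and>
       (\<forall>i\<in>{1..n}.
          (\<Sum>j\<in>{0..n}. tot_force (F i j)) - (\<Sum>k\<in>{1..n}. tot_force (F k i)) - 1 = 0 \<and>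
          (\<Sum>j\<in>{0..n}. tot_moment (F i j)) - (\<Sum>k\<in>{1..n}. tot_moment (F k i))
             - (x i + 1/2) = 0))"

definition overhang :: "nat \<Rightarrow> (nat \<Rightarrow> real) \<Rightarrow> real" where
  "overhang n x = Max ((\<lambda>i. x i + 1) ` {1..n})"

text \<open>A (signed) distribution is represented as a finitely supported function
  real => real (mass at each point); a distribution has nonnegative masses.\<close>
definition signed_distr :: "(real \<Rightarrow> real) \<Rightarrow> bool" where
  "signed_distr \<mu> \<longleftrightarrow> finite {t. \<mu> t \<noteq> 0}"

definition distr :: "(real \<Rightarrow> real) \<Rightarrow> bool" where
  "distr \<mu> \<longleftrightarrow> signed_distr \<mu> \<and> (\<forall>t. \<mu> t \<ge> 0)"

definition measure_of :: "(real \<Rightarrow> real) \<Rightarrow> real set \<Rightarrow> real" where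
  "measure_of \<mu> A = (\<Sum>t\<in>{t\<in>A. \<mu> t \<noteq> 0}. \<mu> t)"

definition moment :: "nat \<Rightarrow> (real \<Rightarrow> real) \<Rightarrow> real" where
  "moment j \<mu> = (\<Sum>t\<in>{t. \<mu> t \<noteq> 0}. \<mu> t * t ^ j)"

definition is_move :: "real \<Rightarrow> (real \<Rightarrow> real) \<Rightarrow> bool" where
  "is_move a \<delta> \<longleftrightarrow> signed_distr \<delta> \<and> (\<forall>t. \<delta> t \<noteq> 0 \<longrightarrow> a \<le> t \<and> t \<le> a + 1) \<and>
     moment 0 \<delta> = 0 \<and> moment 1 \<delta> = 0"

definition lossy :: "real \<Rightarrow> (real \<Rightarrow> real) \<Rightarrow> (real \<Rightarrow> real)" where
  "lossy a \<delta> = (\<lambda>t. \<delta> t - (if t = a + 1/2 then 1 else 0))"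

fun lossy_seq :: "(real \<Rightarrow> real) \<Rightarrow> (real \<times> (real \<Rightarrow> real)) list \<Rightarrow> (real \<Rightarrow> real) \<Rightarrow> bool" where
  "lossy_seq \<mu> [] \<mu>' \<longleftrightarrow> \<mu>' = \<mu>"
| "lossy_seq \<mu> ((a, \<delta>) # ms) \<mu>' \<longleftrightarrow>
     is_move a \<delta> \<and> distr (\<lambda>t. \<mu> t + lossy a \<delta> t) \<and>
     lossy_seq (\<lambda>t. \<mu> t + lossy a \<delta> t) ms \<mu>'"

end

theory Submission
  imports Defs
begin

(*
  Fix a force system F witnessing the balance of the stack, where
  F i j is the upward force distribution that support j (block or table 0) exerts on
  block i.  For a set S of blocks that is closed downwards (every block of S rests only
  on the table or on blocks of S), let cut_forces S be the distribution of all upward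
  forces that the table and the blocks of S exert on the blocks outside S: it is the
  "force profile" across the boundary of S.

  (1) cut_forces {} consists of the table reactions: a distribution of total mass n on
      (-inf,0] (summing the force balances of all blocks).
  (2) Adding a block k whose supports already lie in S changes cut_forces by the lossy
      move of block k: remove the forces from its supports, add the forces it exerts on
      the blocks above and add back its weight.  The force and moment balance of k say
      exactly that this is a move on [x k, x k + 1].
  (3) Adding the blocks of S in order of increasing height reaches cut_forces S with
      card S lossy moves.
  (4) If b is a block of maximal overhang and S the blocks strictly below b, then b is
      outside S and all its supports lie in S or the table; these forces act at points
      >= x b = d - 1 and have total mass 1 plus the load on b, so at least 1.
  Since b is not in S, card S <= n - 1, which proves the theorem.
*)

lemma lossy_seq_snoc:
  "lossy_seq \<mu> (ms @ [(a, \<delta>)]) \<nu> \<longleftrightarrow>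
   (\<exists>\<mu>'. lossy_seq \<mu> ms \<mu>' \<and> is_move a \<delta> \<and> distr (\<lambda>t. \<mu>' t + lossy a \<delta> t) \<and>
          \<nu> = (\<lambda>t. \<mu>' t + lossy a \<delta> t))"
proof (induction ms arbitrary: \<mu>)
  case (Cons m ms)
  obtain a' \<delta>' where "m = (a', \<delta>')" by fastforce
  with Cons show ?case by auto
qed auto

lemma tot_force_eq_sum:
  assumes "finite A" "supp_f f \<subseteq> A"
  shows "tot_force f = (\<Sum>t\<in>A. f t)"
  unfolding tot_force_def
  by (rule sum.mono_neutral_left[OF assms]) (auto simp: supp_f_def)

lemma tot_moment_eq_sum:
  assumes "finite A" "supp_f f \<subseteq> A"
  shows "tot_moment f = (\<Sum>t\<in>A. t * f t)"
  unfolding tot_moment_def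
  by (rule sum.mono_neutral_left[OF assms]) (auto simp: supp_f_def)

lemma moment_eq_sum:
  assumes "finite A" "{t. \<mu> t \<noteq> 0} \<subseteq> A"
  shows "moment m \<mu> = (\<Sum>t\<in>A. \<mu> t * t ^ m)"
  unfolding moment_def
  by (rule sum.mono_neutral_left[OF assms]) auto

locale balanced_forces =
  fixes n :: nat and h :: real and x y :: "nat \<Rightarrow> real"
    and F :: "nat \<Rightarrow> nat \<Rightarrow> real \<Rightarrow> real"
  assumes height_pos: "h > 0"
    and force_nonneg: "\<And>i j p. F i j p \<ge> 0"
    and force_finite: "\<And>i j. finite (supp_f (F i j))"
    and force_support: "\<And>i j p. F i j p \<noteq> 0 \<Longrightarrow>
          i \<in> {1..n} \<and> j \<in> {0..n} \<and> rests_on h x y i j \<and> p \<in> contact h x y i j"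
    and force_balance: "\<And>i. i \<in> {1..n} \<Longrightarrow>
          (\<Sum>j\<in>{0..n}. tot_force (F i j)) = 1 + (\<Sum>k\<in>{1..n}. tot_force (F k i))"
    and moment_balance: "\<And>i. i \<in> {1..n} \<Longrightarrow>
          (\<Sum>j\<in>{0..n}. tot_moment (F i j)) = (x i + 1/2) + (\<Sum>k\<in>{1..n}. tot_moment (F k i))"

lemma balanced_forces_exist:
  assumes "valid_stack n h x y" "balanced n h x y"
  shows "\<exists>F. balanced_forces n h x y F"
proof -
  from assms(2) obtain F where
    "(\<forall>i j p. F i j p \<ge> 0) \<and> (\<forall>i j. finite (supp_f (F i j))) \<and>
     (\<forall>i j p. F i j p \<noteq> 0 \<longrightarrow>
        i \<in> {1..n} \<and> j \<in> {0..n} \<and> rests_on h x y i j \<and> p \<in> contact h x y i j) \<and>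
     (\<forall>i\<in>{1..n}.
        (\<Sum>j\<in>{0..n}. tot_force (F i j)) - (\<Sum>k\<in>{1..n}. tot_force (F k i)) - 1 = 0 \<and>
        (\<Sum>j\<in>{0..n}. tot_moment (F i j)) - (\<Sum>k\<in>{1..n}. tot_moment (F k i))
           - (x i + 1/2) = 0)"
    unfolding balanced_def by blast
  moreover have "h > 0" using assms(1) unfolding valid_stack_def by blast
  ultimately have "balanced_forces n h x y F"
    by unfold_locales (auto simp: algebra_simps)
  then show ?thesis by blast
qed

context balanced_forces
begin

lemma force_indices: "F i j p \<noteq> 0 \<Longrightarrow> i \<in> {1..n} \<and> j \<in> {0..n}"
  using force_support by blast

lemma force_on_block: "F i j p \<noteq> 0 \<Longrightarrow> x i \<le> p \<and> p \<le> x i + 1"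
  using force_support[of i j p]
  by (cases "j = 0") (auto simp: contact_def block_def)

lemma force_from_table: "F i 0 p \<noteq> 0 \<Longrightarrow> p \<le> 0"
  using force_support[of i 0 p] by (auto simp: contact_def block_def table_def)

lemma force_from_block:
  assumes "F i j p \<noteq> 0" "j \<noteq> 0"
  shows "x j \<le> p \<and> p \<le> x j + 1 \<and> y i = y j + h"
  using force_support[OF assms(1)] assms(2)
  by (auto simp: contact_def block_def rests_on_def)

lemma no_self_force: "F k k p = 0"
  using force_from_block[of k k p] force_indices[of k k p] height_pos by fastforce

lemma tot_force_nonneg: "tot_force (F i j) \<ge> 0"
  unfolding tot_force_def by (rule sum_nonneg) (use force_nonneg in auto)

definition force_points :: "real set" where
  "force_points = (\<Union>i\<in>{0..n}. \<Union>j\<in>{0..n}. supp_f (F i j))"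

lemma finite_force_points: "finite force_points"
  unfolding force_points_def using force_finite by auto

lemma in_force_points: "F i j t \<noteq> 0 \<Longrightarrow> t \<in> force_points"
  unfolding force_points_def supp_f_def using force_indices[of i j t] by fastforce

lemma supp_in_force_points: "supp_f (F i j) \<subseteq> force_points"
  using in_force_points by (auto simp: supp_f_def)

text \<open>The table carries the total weight n of the stack: summing the force balances of
  all blocks, the forces between blocks cancel.\<close>
lemma table_force_total: "(\<Sum>i\<in>{1..n}. tot_force (F i 0)) = real n"
proof -
  have split0: "(\<Sum>j\<in>{0..n}. tot_force (F k j)) = tot_force (F k 0) + (\<Sum>j\<in>{1..n}. tot_force (F k j))"
    for k by (simp add: sum.atLeast_Suc_atMost)
  have "(\<Sum>k\<in>{1..n}. \<Sum>j\<in>{0..n}. tot_force (F k j)) =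
        real n + (\<Sum>k\<in>{1..n}. \<Sum>i\<in>{1..n}. tot_force (F i k))"
    using force_balance by (simp add: sum.distrib)
  moreover have "(\<Sum>k\<in>{1..n}. \<Sum>j\<in>{1..n}. tot_force (F k j)) =
                 (\<Sum>k\<in>{1..n}. \<Sum>i\<in>{1..n}. tot_force (F i k))"
    by (rule sum.swap)
  ultimately show ?thesis by (simp add: split0 sum.distrib)
qed

definition down_closed :: "nat set \<Rightarrow> bool" where
  "down_closed S \<longleftrightarrow> S \<subseteq> {1..n} \<and> (\<forall>i\<in>S. \<forall>j p. F i j p \<noteq> 0 \<longrightarrow> j = 0 \<or> j \<in> S)"

definition cut_forces :: "nat set \<Rightarrow> real \<Rightarrow> real" where
  "cut_forces S t = (\<Sum>i\<in>{1..n}-S. F i 0 t + (\<Sum>j\<in>S. F i j t))"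

lemma cut_forces_support: "{t. cut_forces S t \<noteq> 0} \<subseteq> force_points"
proof
  fix t assume "t \<in> {t. cut_forces S t \<noteq> 0}"
  then have "\<exists>i j. F i j t \<noteq> 0" unfolding cut_forces_def by (auto intro: ccontr)
  then show "t \<in> force_points" using in_force_points by blast
qed

lemma distr_cut_forces: "distr (cut_forces S)"
  unfolding distr_def signed_distr_def cut_forces_def
  using finite_subset[OF cut_forces_support finite_force_points]
  by (auto simp: cut_forces_def intro!: sum_nonneg add_nonneg_nonneg force_nonneg)

definition block_move :: "nat \<Rightarrow> real \<Rightarrow> real" where
  "block_move k t = (\<Sum>i\<in>{1..n}. F i k t) - (\<Sum>j\<in>{0..n}. F k j t)
                    + (if t = x k + 1/2 then 1 else 0)"

lemma lossy_block_move:
  "lossy (x k) (block_move k) t = (\<Sum>i\<in>{1..n}. F i k t) - (\<Sum>j\<in>{0..n}. F k j t)"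
  by (simp add: lossy_def block_move_def)

lemma block_move_support: "{t. block_move k t \<noteq> 0} \<subseteq> insert (x k + 1/2) force_points"
proof
  fix t assume "t \<in> {t. block_move k t \<noteq> 0}"
  then have "t = x k + 1/2 \<or> (\<exists>i j. F i j t \<noteq> 0)"
    unfolding block_move_def by (auto intro: ccontr)
  then show "t \<in> insert (x k + 1/2) force_points" using in_force_points by blast
qed

lemma moment_block_move:
  fixes k :: nat
  defines "A \<equiv> insert (x k + 1/2) force_points"
  shows "moment m (block_move k) =
           (\<Sum>i\<in>{1..n}. \<Sum>t\<in>A. F i k t * t ^ m) - (\<Sum>j\<in>{0..n}. \<Sum>t\<in>A. F k j t * t ^ m)
           + (x k + 1/2) ^ m"
proof -
  have finA: "finite A" unfolding A_def using finite_force_points by simp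
  have weight: "(\<Sum>t\<in>A. (if t = x k + 1/2 then 1 else 0) * t ^ m) = (x k + 1/2) ^ m"
  proof -
    have "(\<Sum>t\<in>A. (if t = x k + 1/2 then 1 else 0) * t ^ m) =
          (\<Sum>t\<in>A. if t = x k + 1/2 then t ^ m else 0)"
      by (rule sum.cong) auto
    then show ?thesis using finA by (simp add: A_def)
  qed
  have "moment m (block_move k) = (\<Sum>t\<in>A. block_move k t * t ^ m)"
    using finA block_move_support unfolding A_def by (rule moment_eq_sum)
  also have "\<dots> = (\<Sum>t\<in>A. \<Sum>i\<in>{1..n}. F i k t * t ^ m) - (\<Sum>t\<in>A. \<Sum>j\<in>{0..n}. F k j t * t ^ m)
                  + (\<Sum>t\<in>A. (if t = x k + 1/2 then 1 else 0) * t ^ m)"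
    unfolding block_move_def left_diff_distrib distrib_right sum_distrib_right
    by (simp add: sum.distrib sum_subtractf)
  also have "\<dots> = (\<Sum>i\<in>{1..n}. \<Sum>t\<in>A. F i k t * t ^ m) - (\<Sum>j\<in>{0..n}. \<Sum>t\<in>A. F k j t * t ^ m)
                  + (x k + 1/2) ^ m"
    using weight sum.swap[where A = A and B = "{1..n}" and g = "\<lambda>t i. F i k t * t ^ m"]
      sum.swap[where A = A and B = "{0..n}" and g = "\<lambda>t j. F k j t * t ^ m"]
    by simp
  finally show ?thesis .
qed

lemma block_move_is_move:
  assumes k: "k \<in> {1..n}"
  shows "is_move (x k) (block_move k)"
proof -
  let ?A = "insert (x k + 1/2) force_points"
  have finA: "finite ?A" using finite_force_points by simp
  have suppA: "supp_f (F i j) \<subseteq> ?A" for i j using supp_in_force_points by blast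
  have "moment 0 (block_move k) = 0"
    using force_balance[OF k]
    by (simp add: moment_block_move tot_force_eq_sum[OF finA suppA])
  moreover have "moment 1 (block_move k) = 0"
    using moment_balance[OF k]
    by (simp add: moment_block_move tot_moment_eq_sum[OF finA suppA] mult.commute)
  moreover have "x k \<le> t \<and> t \<le> x k + 1" if "block_move k t \<noteq> 0" for t
  proof (rule ccontr)
    assume outside: "\<not> (x k \<le> t \<and> t \<le> x k + 1)"
    then have "F i k t = 0" for i
      using force_from_block[of i k t] force_indices[of i k t] k by fastforce
    moreover have "F k j t = 0" for j using force_on_block[of k j t] outside by auto
    ultimately have "block_move k t = 0" using outside unfolding block_move_def by auto
    with that show False by simp
  qed
  moreover have "signed_distr (block_move k)"
    unfolding signed_distr_def using finite_subset[OF block_move_support finA] .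
  ultimately show ?thesis unfolding is_move_def by blast
qed

lemma cut_forces_insert:
  assumes S: "down_closed S" and k: "k \<in> {1..n}" "k \<notin> S"
    and Sk: "down_closed (insert k S)"
  shows "cut_forces (insert k S) t = cut_forces S t + lossy (x k) (block_move k) t"
proof -
  let ?R = "{1..n} - S - {k}"
  have finS: "finite S" using S finite_subset unfolding down_closed_def by blast
  have k_rest: "k \<in> {1..n} - S" using k by auto
  have new: "cut_forces (insert k S) t = (\<Sum>i\<in>?R. F i 0 t + F i k t + (\<Sum>j\<in>S. F i j t))"
    unfolding cut_forces_def using finS k
    by (simp add: add.assoc Diff_insert[symmetric] insert_commute)
  have old: "cut_forces S t = (F k 0 t + (\<Sum>j\<in>S. F k j t)) + (\<Sum>i\<in>?R. F i 0 t + (\<Sum>j\<in>S. F i j t))"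
    unfolding cut_forces_def using sum.remove[OF _ k_rest] by simp
  text \<open>No block of S rests on k, and k rests only on the table and on S.\<close>
  have load: "(\<Sum>i\<in>{1..n}. F i k t) = (\<Sum>i\<in>?R. F i k t)"
  proof (rule sum.mono_neutral_right)
    show "\<forall>i\<in>{1..n} - ?R. F i k t = 0"
      using S k no_self_force unfolding down_closed_def by fastforce
  qed auto
  have supports: "(\<Sum>j\<in>{0..n}. F k j t) = F k 0 t + (\<Sum>j\<in>S. F k j t)"
  proof -
    have "(\<Sum>j\<in>{0..n}. F k j t) = (\<Sum>j\<in>insert 0 S. F k j t)"
    proof (rule sum.mono_neutral_right)
      show "insert 0 S \<subseteq> {0..n}" using S unfolding down_closed_def by auto
      show "\<forall>j\<in>{0..n} - insert 0 S. F k j t = 0"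
        using Sk no_self_force unfolding down_closed_def by auto
    qed auto
    also have "\<dots> = F k 0 t + (\<Sum>j\<in>S. F k j t)"
      using finS S unfolding down_closed_def by (subst sum.insert) auto
    finally show ?thesis .
  qed
  show ?thesis unfolding lossy_block_move new old load supports
    by (simp add: sum.distrib algebra_simps)
qed

lemma down_closed_below: "down_closed {k \<in> {1..n}. y k < c}"
  unfolding down_closed_def
proof (intro conjI ballI allI impI)
  fix i j p assume i: "i \<in> {k \<in> {1..n}. y k < c}" and F: "F i j p \<noteq> 0"
  show "j = 0 \<or> j \<in> {k \<in> {1..n}. y k < c}"
  proof (cases "j = 0")
    case False
    then have "y i = y j + h" "j \<in> {1..n}"
      using force_from_block[OF F] force_indices[OF F] by auto
    with i height_pos show ?thesis by auto
  qed simp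
qed auto

lemma down_closed_remove_top:
  assumes S: "down_closed S" and kS: "k \<in> S" and top: "\<And>i. i \<in> S \<Longrightarrow> y i \<le> y k"
  shows "down_closed (S - {k})"
  unfolding down_closed_def
proof (intro conjI ballI allI impI)
  show "S - {k} \<subseteq> {1..n}" using S unfolding down_closed_def by auto
next
  fix i j p assume i: "i \<in> S - {k}" and F: "F i j p \<noteq> 0"
  have "j \<noteq> k"
  proof
    assume "j = k"
    then have "y i = y k + h" using force_from_block[OF F] kS S unfolding down_closed_def by auto
    with top[of i] i height_pos show False by auto
  qed
  with i F S show "j = 0 \<or> j \<in> S - {k}" unfolding down_closed_def by auto
qed

lemma cut_forces_reachable:
  assumes "finite S" "down_closed S"
  shows "\<exists>ms. length ms = card S \<and> lossy_seq (cut_forces {}) ms (cut_forces S)"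
  using assms
proof (induction "card S" arbitrary: S)
  case 0
  then show ?case by (intro exI[of _ "[]"]) simp
next
  case (Suc m)
  then have "Max (y ` S) \<in> y ` S" by (intro Max_in) auto
  then obtain k where kS: "k \<in> S" and ky: "y k = Max (y ` S)" by auto
  have top: "y i \<le> y k" if "i \<in> S" for i using ky that Suc.prems by simp
  have S': "down_closed (S - {k})" by (rule down_closed_remove_top[OF Suc.prems(2) kS top])
  obtain ms where ms: "length ms = card (S - {k})" "lossy_seq (cut_forces {}) ms (cut_forces (S - {k}))"
    using Suc.hyps Suc.prems kS S' by (metis card_Diff_singleton diff_Suc_1 finite_Diff)
  have k: "k \<in> {1..n}" using kS Suc.prems unfolding down_closed_def by auto
  have "(\<lambda>t. cut_forces (S - {k}) t + lossy (x k) (block_move k) t) = cut_forces S"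
    using cut_forces_insert[OF S' k] Suc.prems kS insert_absorb[OF kS] by (auto simp: fun_eq_iff)
  then show ?case
    using ms block_move_is_move[OF k] distr_cut_forces[of S] Suc.hyps(2) kS Suc.prems
    by (intro exI[of _ "ms @ [(x k, block_move k)]"]) (auto simp: lossy_seq_snoc)
qed

lemma initial_cut_forces:
  "moment 0 (cut_forces {}) = real n \<and> measure_of (cut_forces {}) {t. t \<le> 0} = real n \<and>
   measure_of (cut_forces {}) {t. t > 0} = 0"
proof -
  have table: "cut_forces {} = (\<lambda>t. \<Sum>i\<in>{1..n}. F i 0 t)"
    unfolding cut_forces_def by (simp add: fun_eq_iff)
  have nonpos: "t \<le> 0" if "cut_forces {} t \<noteq> 0" for t
  proof (rule ccontr)
    assume "\<not> t \<le> 0"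
    then have "F i 0 t = 0" for i using force_from_table[of i t] by linarith
    then show False using that unfolding table by simp
  qed
  have "moment 0 (cut_forces {}) = (\<Sum>t\<in>force_points. \<Sum>i\<in>{1..n}. F i 0 t)"
    by (simp add: moment_eq_sum[OF finite_force_points cut_forces_support] cut_forces_def)
  also have "\<dots> = (\<Sum>i\<in>{1..n}. \<Sum>t\<in>force_points. F i 0 t)"
    by (rule sum.swap)
  also have "\<dots> = (\<Sum>i\<in>{1..n}. tot_force (F i 0))"
    by (simp add: tot_force_eq_sum[OF finite_force_points supp_in_force_points])
  finally have mass: "moment 0 (cut_forces {}) = real n" using table_force_total by simp
  moreover have "measure_of (cut_forces {}) {t. t \<le> 0} = moment 0 (cut_forces {})"
    unfolding measure_of_def moment_def using nonpos by (intro sum.cong) auto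
  moreover have "measure_of (cut_forces {}) {t. t > 0} = 0"
  proof -
    have "{t \<in> {t. t > 0}. cut_forces {} t \<noteq> 0} = {}" using nonpos by fastforce
    then show ?thesis unfolding measure_of_def by simp
  qed
  ultimately show ?thesis by simp
qed

text \<open>Once all blocks below b are removed, the forces supporting b are part of the cut
  forces; they act at points at least x b and carry at least the weight of b.\<close>
lemma cut_forces_below_block:
  assumes b: "b \<in> {1..n}"
  defines "S \<equiv> {k\<in>{1..n}. y k < y b}"
  shows "measure_of (cut_forces S) {t. t \<ge> x b} \<ge> 1"
proof -
  let ?g = "\<lambda>t. \<Sum>j\<in>{0..n}. F b j t"
  let ?B = "{t \<in> {t. t \<ge> x b}. cut_forces S t \<noteq> 0}"
  have supports_le: "?g t \<le> cut_forces S t" for t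
  proof -
    have "?g t = (\<Sum>j\<in>insert 0 S. F b j t)"
    proof (rule sum.mono_neutral_right)
      show "\<forall>j\<in>{0..n} - insert 0 S. F b j t = 0"
      proof (rule ballI, rule ccontr)
        fix j assume j: "j \<in> {0..n} - insert 0 S" and "F b j t \<noteq> 0"
        then have "y b = y j + h" using force_from_block by blast
        with j height_pos show False unfolding S_def by auto
      qed
    qed (auto simp: S_def)
    also have "\<dots> = F b 0 t + (\<Sum>j\<in>S. F b j t)"
      unfolding S_def by (subst sum.insert) auto
    also have "\<dots> \<le> cut_forces S t"
      unfolding cut_forces_def
      by (rule member_le_sum[where f = "\<lambda>i. F i 0 t + (\<Sum>j\<in>S. F i j t)"])
         (use b in \<open>auto simp: S_def force_nonneg sum_nonneg\<close>)
    finally show ?thesis .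
  qed
  have "1 \<le> 1 + (\<Sum>k\<in>{1..n}. tot_force (F k b))" using tot_force_nonneg by (simp add: sum_nonneg)
  also have "\<dots> = (\<Sum>j\<in>{0..n}. \<Sum>t\<in>force_points. F b j t)"
    using force_balance[OF b] by (simp add: tot_force_eq_sum[OF finite_force_points supp_in_force_points])
  also have "\<dots> = (\<Sum>t\<in>force_points. ?g t)" by (rule sum.swap)
  also have "\<dots> = (\<Sum>t\<in>?B. ?g t)"
  proof (rule sum.mono_neutral_right[OF finite_force_points])
    show "?B \<subseteq> force_points" using cut_forces_support by auto
    show "\<forall>t\<in>force_points - ?B. ?g t = 0"
    proof (rule ballI, rule ccontr)
      fix t assume t: "t \<in> force_points - ?B" and nz: "?g t \<noteq> 0"
      then obtain j where "F b j t \<noteq> 0" by (meson sum.neutral)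
      then have "x b \<le> t" using force_on_block by blast
      moreover have "?g t \<ge> 0" by (simp add: force_nonneg sum_nonneg)
      then have "cut_forces S t \<noteq> 0" using supports_le[of t] nz by linarith
      ultimately show False using t by auto
    qed
  qed
  also have "\<dots> \<le> (\<Sum>t\<in>?B. cut_forces S t)" by (rule sum_mono) (rule supports_le)
  finally show ?thesis unfolding measure_of_def by simp
qed

end

theorem mainTheorem7:
  fixes n :: nat and h d :: real and x y :: "nat \<Rightarrow> real"
  assumes "n \<ge> 1"
    and "valid_stack n h x y"
    and "balanced n h x y"
    and "overhang n x = d"
  shows "\<exists>\<mu> \<mu>' ms. distr \<mu> \<and> moment 0 \<mu> = real n \<and> measure_of \<mu> {t. t \<le> 0} = real n \<and>
           measure_of \<mu> {t. t > 0} = 0 \<and> length ms \<le> n - 1 \<and> lossy_seq \<mu> ms \<mu>' \<and>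
           measure_of \<mu>' {t. t \<ge> d - 1} \<ge> 1"
proof -
  obtain F where "balanced_forces n h x y F"
    using balanced_forces_exist[OF assms(2,3)] by blast
  then interpret balanced_forces n h x y F .
  have "overhang n x \<in> (\<lambda>i. x i + 1) ` {1..n}"
    unfolding overhang_def using assms(1) by (intro Max_in) auto
  then obtain b where b: "b \<in> {1..n}" and bd: "x b = d - 1"
    using assms(4) by auto
  define S where "S = {k\<in>{1..n}. y k < y b}"
  obtain ms where ms: "length ms = card S" "lossy_seq (cut_forces {}) ms (cut_forces S)"
    using cut_forces_reachable[OF _ down_closed_below] unfolding S_def by auto
  have "card S \<le> card ({1..n} - {b})" unfolding S_def by (intro card_mono) auto
  then have "length ms \<le> n - 1" using ms b by simp
  moreover have "measure_of (cut_forces S) {t. t \<ge> d - 1} \<ge> 1"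
    using cut_forces_below_block[OF b] bd unfolding S_def by simp
  ultimately show ?thesis
    using distr_cut_forces[of "{}"] initial_cut_forces ms by blast
qed

end
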